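(* Assume the setting and Algorithm 1 described in the context, with $|Q|\ge2$. Take parameters $P=\Theta(\frac{M^2}{\varepsilon_1^2}\log|Q|)$, $R=\Theta(\frac{M}{\varepsilon_1})$ and $T=\Theta(\frac{R}{\varepsilon_2}\log|Q|)$, with suitable absolute constants. Then with probability at least $7/8$ the distribution $\hat q$ returned by Algorithm 1 satisfies $\mathrm{Inv}(\hat q)\le\varepsilon_2$.
   Context: Setting. $X$ is a countable set and $p$ is a probability distribution on $X$. For a distribution $q$ on $X$, $q_x$ is the mass of $x$, $\mathrm{supp}(q)=\{x:q_x>0\}$, and $q(A)=\sum_{x\in A}q_x$. An invalidity function $\mathrm{Inv}:X\to\{0,1\}$ is given with $\mathrm{Inv}(x)=0$ for all $x\in\mathrm{supp}(p)$. For a distribution $q$, $\mathrm{Inv}(q)=\mathbb{E}_{x\sim q}[\mathrm{Inv}(x)]$. Fix $M>0$ and a monotone non-increasing function $L:[0,1]\to[0,M]$, and set $\mathrm{Loss}(q)=\mathbb{E}_{x\sim p}[L(q_x)]$. The learner may draw i.i.d. samples from $p$ and may query $\mathrm{Inv}(x)$ at any point $x$. $Q$ is a finite family of probability distributions on $X$ containing at least one $q$ with $\mathrm{Inv}(q)=0$. $q^*$ denotes a minimizer of $\mathrm{Loss}(q)$ over $\{q\in Q:\mathrm{Inv}(q)=0\}$. Oracle. For a finite multiset $X_P$ and a finite set $X_N\subseteq X$, $\mathrm{Oracle}(X_P,X_N)$ returns some $q\in Q$ minimizing $\frac1{|X_P|}\sum_{x\in X_P}L(q_x)$ among all $q\in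 Q$ with $\mathrm{supp}(q)\cap X_N=\emptyset$. Algorithm 1 (parameters $P,R,T$): (1) Draw a multiset $X_P$ of $P$ i.i.d. samples from $p$. Set $X_N=\emptyset$. (2) For $i=1,\dots,R$: let $q^i=\mathrm{Oracle}(X_P,X_N)$. Draw $T$ i.i.d. samples from $q^i$ and query the invalidity of each. If none is invalid, output $q^i$ and stop. Otherwise add all invalid ones to $X_N$. (3) If no output has been produced after $R$ rounds, choose $i$ uniformly from $\{1,\dots,R\}$ and let $A^i=\{x:\exists j>i,\ x\in\mathrm{supp}(q^j)\}$. Output the distribution $\hat q$ that draws $x\sim q^i$ and returns $x$ if $x\in A^i$, and otherwise returns a fixed point $x^*$ with $\mathrm{Inv}(x^* )=0$. *)

theory Defs
  imports "HOL-Probability.Probability_Mass_Function" "HOL-Library.Multiset"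
begin

text \<open>The countable ground set X is represented by nat (every countable set embeds
into nat); invalidity is a predicate (True = invalid, i.e. Inv x = 1).\<close>

definition invalidity :: "(nat \<Rightarrow> bool) \<Rightarrow> nat pmf \<Rightarrow> real" where
  "invalidity Inv q = measure_pmf.prob q {x. Inv x}"

primrec samples :: "nat \<Rightarrow> nat pmf \<Rightarrow> nat list pmf" where
  "samples 0 q = return_pmf []"
| "samples (Suc n) q = bind_pmf q (\<lambda>x. map_pmf (Cons x) (samples n q))"

definition emp_loss :: "(real \<Rightarrow> real) \<Rightarrow> nat multiset \<Rightarrow> nat pmf \<Rightarrow> real" where
  "emp_loss L XP q = sum_mset (image_mset (\<lambda>x. L (pmf q x)) XP) / real (size XP)"

definition is_oracle ::
  "nat pmf set \<Rightarrow> (real \<Rightarrow> real) \<Rightarrow> (nat multiset \<Rightarrow> nat set \<Rightarrow> nat pmf) \<Rightarrow> bool" where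
  "is_oracle Q L orc \<longleftrightarrow>
     (\<forall>XP XN. finite XN \<and> XP \<noteq> {#} \<and> (\<exists>q\<in>Q. set_pmf q \<inter> XN = {}) \<longrightarrow>
        orc XP XN \<in> Q \<and> set_pmf (orc XP XN) \<inter> XN = {} \<and>
        (\<forall>q\<in>Q. set_pmf q \<inter> XN = {} \<longrightarrow> emp_loss L XP (orc XP XN) \<le> emp_loss L XP q))"

text \<open>Main loop of Algorithm 1 with r remaining rounds, current XN and history of
the q^i produced so far.  Result: Inl q = early output, Inr [q^1,...,q^R].\<close>
primrec rounds ::
  "(nat \<Rightarrow> bool) \<Rightarrow> (nat multiset \<Rightarrow> nat set \<Rightarrow> nat pmf) \<Rightarrow> nat multiset \<Rightarrow> nat \<Rightarrow>
   nat \<Rightarrow> nat set \<Rightarrow> nat pmf list \<Rightarrow> (nat pmf + nat pmf list) pmf" where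
  "rounds Inv orc XP T 0 XN hist = return_pmf (Inr hist)"
| "rounds Inv orc XP T (Suc r) XN hist =
     (let q = orc XP XN in
      bind_pmf (samples T q) (\<lambda>xs.
        let bad = {x \<in> set xs. Inv x} in
        if bad = {} then return_pmf (Inl q)
        else rounds Inv orc XP T r (XN \<union> bad) (hist @ [q])))"

definition fallback :: "nat \<Rightarrow> nat pmf list \<Rightarrow> nat \<Rightarrow> nat pmf" where
  "fallback xstar qs i =
     map_pmf (\<lambda>x. if (\<exists>j. i < j \<and> j < length qs \<and> x \<in> set_pmf (qs ! j)) then x else xstar)
       (qs ! i)"

definition algorithm1 ::
  "nat pmf \<Rightarrow> (nat \<Rightarrow> bool) \<Rightarrow> (nat multiset \<Rightarrow> nat set \<Rightarrow> nat pmf) \<Rightarrow> nat \<Rightarrow>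
   nat \<Rightarrow> nat \<Rightarrow> nat \<Rightarrow> nat pmf pmf" where
  "algorithm1 p Inv orc xstar P R T =
     bind_pmf (samples P p) (\<lambda>xs.
       bind_pmf (rounds Inv orc (mset xs) T R {} []) (\<lambda>res.
         case res of
           Inl q \<Rightarrow> return_pmf q
         | Inr qs \<Rightarrow> map_pmf (fallback xstar qs) (pmf_of_set {0..<R})))"

end

theory Submission
  imports Defs
begin

text \<open>
  Call a run of Algorithm 1 bad if it stops early with some q_i of invalidity above \<epsilon> although
  none of its T samples was invalid, or if it runs through all R rounds and some q_i puts more
  than \<delta> = \<epsilon>/R invalid mass on the support of a later q_j. On a good run every possible output
  has invalidity at most \<epsilon>: the invalid mass of the fallback built from q_i lies in the union of
  the supports of the at most R later q_j.

  A round that does not stop adds an invalid point of supp q_i to X_N, and unless its samples were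
  unlucky (probability at most (1-\<epsilon>)^T + |Q|(1-\<delta>)^T) it also hits the support of every q on
  which q_i puts heavy invalid mass, so those q are excluded from later rounds because the oracle
  avoids X_N. As q_i itself is excluded too, the number of members of Q avoiding X_N strictly
  drops, and induction on it bounds the probability of a bad run by
  |Q|((1-\<epsilon>)^T + |Q|(1-\<delta>)^T) \<le> 1/8 once \<delta>T \<ge> 6 ln |Q|.
\<close>

lemma set_pmf_samples:
  "xs \<in> set_pmf (samples n q) \<Longrightarrow> length xs = n \<and> set xs \<subseteq> set_pmf q"
  by (induction n arbitrary: xs) fastforce+

lemma prob_samples_all:
  "measure_pmf.prob (samples n q) {xs. \<forall>x\<in>set xs. P x} = measure_pmf.prob q {x. P x} ^ n"
proof (induction n)
  case 0
  then show ?case by simp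
next
  case (Suc n)
  have "emeasure (samples (Suc n) q) {xs. \<forall>x\<in>set xs. P x}
      = (\<integral>\<^sup>+x. indicator {x. P x} x * ennreal (measure_pmf.prob q {x. P x} ^ n) \<partial>q)"
    unfolding samples.simps emeasure_bind_pmf
    by (intro nn_integral_cong)
      (simp add: emeasure_map_pmf vimage_def measure_pmf.emeasure_eq_measure Suc split: split_indicator)
  also have "\<dots> = ennreal (measure_pmf.prob q {x. P x} ^ Suc n)"
    by (simp add: nn_integral_multc measure_pmf.emeasure_eq_measure ennreal_mult'' mult.commute)
  finally show ?case
    by (simp add: measure_pmf.emeasure_eq_measure)
qed

lemma prob_samples_avoid_le:
  assumes "\<epsilon> \<le> measure_pmf.prob q A"
  shows "measure_pmf.prob (samples n q) {xs. \<forall>x\<in>set xs. x \<notin> A} \<le> (1 - \<epsilon>) ^ n"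
proof -
  have "measure_pmf.prob q {x. x \<notin> A} = 1 - measure_pmf.prob q A"
    using measure_pmf.prob_compl[of A q] by (simp add: Compl_eq_Diff_UNIV[symmetric] Collect_neg_eq)
  then show ?thesis
    using assms measure_pmf.prob_le_1[of q A] by (simp add: prob_samples_all power_mono)
qed

lemma measure_bind_pmf_le:
  fixes c :: real
  assumes c: "c \<ge> 0"
    and bound: "\<And>x. x \<in> set_pmf A \<Longrightarrow> x \<notin> E \<Longrightarrow> measure_pmf.prob (f x) S \<le> c"
  shows "measure_pmf.prob (bind_pmf A f) S \<le> measure_pmf.prob A E + c"
proof -
  have "emeasure (bind_pmf A f) S = (\<integral>\<^sup>+x. emeasure (f x) S \<partial>A)"
    by simp
  also have "\<dots> \<le> (\<integral>\<^sup>+x. indicator E x + ennreal c \<partial>A)"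
  proof (rule nn_integral_mono_AE, rule AE_pmfI)
    fix x assume x: "x \<in> set_pmf A"
    show "emeasure (f x) S \<le> indicator E x + ennreal c"
    proof (cases "x \<in> E")
      case True
      then show ?thesis
        using measure_pmf.emeasure_le_1[of "f x" S] by (simp add: add_increasing2)
    next
      case False
      then show ?thesis
        using bound[OF x False] by (simp add: measure_pmf.emeasure_eq_measure ennreal_leI)
    qed
  qed
  also have "\<dots> = ennreal (measure_pmf.prob A E + c)"
    using c by (simp add: nn_integral_add measure_pmf.emeasure_eq_measure ennreal_plus)
  finally have "ennreal (measure_pmf.prob (bind_pmf A f) S) \<le> ennreal (measure_pmf.prob A E + c)"
    by (simp only: measure_pmf.emeasure_eq_measure)
  then show ?thesis
    using c by (subst (asm) ennreal_le_iff) auto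
qed

definition avoiding :: "nat pmf set \<Rightarrow> nat set \<Rightarrow> nat pmf set" where
  "avoiding Q N = {q \<in> Q. set_pmf q \<inter> N = {}}"

lemma card_avoiding_less:
  assumes "finite Q" "q \<in> avoiding Q N" "N \<subseteq> N'" "set_pmf q \<inter> N' \<noteq> {}"
  shows "card (avoiding Q N') < card (avoiding Q N)"
proof (rule psubset_card_mono)
  show "finite (avoiding Q N)"
    using assms(1) by (simp add: avoiding_def)
  show "avoiding Q N' \<subset> avoiding Q N"
    using assms(2-4) by (auto simp: avoiding_def)
qed

definition oracle_avoids :: "(nat \<Rightarrow> bool) \<Rightarrow> nat pmf set \<Rightarrow>
    (nat multiset \<Rightarrow> nat set \<Rightarrow> nat pmf) \<Rightarrow> nat multiset \<Rightarrow> bool" where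
  "oracle_avoids Inv Q orc XP \<longleftrightarrow>
     (\<forall>N. finite N \<and> N \<subseteq> {x. Inv x} \<longrightarrow> orc XP N \<in> avoiding Q N)"

lemma oracle_avoidsD:
  "oracle_avoids Inv Q orc XP \<Longrightarrow> finite N \<Longrightarrow> N \<subseteq> {x. Inv x} \<Longrightarrow> orc XP N \<in> avoiding Q N"
  by (simp add: oracle_avoids_def)

lemma is_oracle_avoids:
  assumes "is_oracle Q L orc" "XP \<noteq> {#}" "q0 \<in> Q" "set_pmf q0 \<inter> {x. Inv x} = {}"
  shows "oracle_avoids Inv Q orc XP"
  unfolding oracle_avoids_def
proof (intro allI impI)
  fix N assume N: "finite N \<and> N \<subseteq> {x. Inv x}"
  then have "set_pmf q0 \<inter> N = {}"
    using assms(4) by blast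
  then show "orc XP N \<in> avoiding Q N"
    using assms(1-3) N unfolding is_oracle_def avoiding_def by blast
qed

lemma set_pmf_rounds_Suc:
  assumes "res \<in> set_pmf (rounds Inv orc XP T (Suc r) N hist)"
  obtains xs where "xs \<in> set_pmf (samples T (orc XP N))"
      "{x \<in> set xs. Inv x} = {}" "res = Inl (orc XP N)"
    | xs where "xs \<in> set_pmf (samples T (orc XP N))" "{x \<in> set xs. Inv x} \<noteq> {}"
      "res \<in> set_pmf (rounds Inv orc XP T r (N \<union> {x \<in> set xs. Inv x}) (hist @ [orc XP N]))"
proof -
  from assms obtain xs where xs: "xs \<in> set_pmf (samples T (orc XP N))"
    and res: "res \<in> set_pmf (if {x \<in> set xs. Inv x} = {} then return_pmf (Inl (orc XP N))
      else rounds Inv orc XP T r (N \<union> {x \<in> set xs. Inv x}) (hist @ [orc XP N]))"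
    by (auto simp: Let_def)
  show thesis
  proof (cases "{x \<in> set xs. Inv x} = {}")
    case True
    then show ?thesis using that(1)[OF xs True] res by (simp only: if_P) simp
  next
    case False
    then show ?thesis using that(2)[OF xs False] res by (simp only: if_False)
  qed
qed

lemma set_pmf_rounds_Inr:
  assumes orc: "oracle_avoids Inv Q orc XP"
  shows "finite N \<Longrightarrow> N \<subseteq> {x. Inv x} \<Longrightarrow> Inr qs \<in> set_pmf (rounds Inv orc XP T r N hist) \<Longrightarrow>
    \<exists>new. qs = hist @ new \<and> length new = r \<and> set new \<subseteq> avoiding Q N"
proof (induction r arbitrary: N hist)
  case 0
  then show ?case by simp
next
  case (Suc r)
  then obtain xs where "{x \<in> set xs. Inv x} \<noteq> {}" and
    res: "Inr qs \<in> set_pmf (rounds Inv orc XP T r (N \<union> {x \<in> set xs. Inv x}) (hist @ [orc XP N]))"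
    by (elim set_pmf_rounds_Suc) auto
  then obtain new where "qs = (hist @ [orc XP N]) @ new" "length new = r"
      "set new \<subseteq> avoiding Q (N \<union> {x \<in> set xs. Inv x})"
    using Suc.IH[OF _ _ res] Suc.prems(1,2) by auto
  moreover have "orc XP N \<in> avoiding Q N"
    using oracle_avoidsD[OF orc Suc.prems(1,2)] .
  ultimately show ?case
    by (intro exI[of _ "orc XP N # new"]) (auto simp: avoiding_def)
qed

definition invalid_overlap :: "(nat \<Rightarrow> bool) \<Rightarrow> nat pmf \<Rightarrow> nat pmf \<Rightarrow> real" where
  "invalid_overlap Inv q q' = measure_pmf.prob q {x. Inv x \<and> x \<in> set_pmf q'}"

text \<open>Only pairs whose first index is at least k, i.e.\ chosen from the current round on, count.\<close>

definition heavy_pair_from :: "(nat \<Rightarrow> bool) \<Rightarrow> real \<Rightarrow> nat \<Rightarrow> nat pmf list \<Rightarrow> bool" where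
  "heavy_pair_from Inv \<delta> k qs \<longleftrightarrow>
     (\<exists>i j. k \<le> i \<and> i < j \<and> j < length qs \<and> invalid_overlap Inv (qs ! i) (qs ! j) > \<delta>)"

definition bad_outcome ::
  "(nat \<Rightarrow> bool) \<Rightarrow> real \<Rightarrow> real \<Rightarrow> nat \<Rightarrow> nat pmf + nat pmf list \<Rightarrow> bool" where
  "bad_outcome Inv \<epsilon> \<delta> k res =
     (case res of Inl q \<Rightarrow> invalidity Inv q > \<epsilon> | Inr qs \<Rightarrow> heavy_pair_from Inv \<delta> k qs)"

definition unlucky_sample ::
  "(nat \<Rightarrow> bool) \<Rightarrow> real \<Rightarrow> real \<Rightarrow> nat pmf set \<Rightarrow> nat pmf \<Rightarrow> nat list \<Rightarrow> bool" where
  "unlucky_sample Inv \<epsilon> \<delta> Q q xs \<longleftrightarrow>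
     (invalidity Inv q > \<epsilon> \<and> (\<forall>x\<in>set xs. \<not> Inv x)) \<or>
     (\<exists>q'\<in>Q. invalid_overlap Inv q q' > \<delta> \<and> (\<forall>x\<in>set xs. \<not> (Inv x \<and> x \<in> set_pmf q')))"

lemma heavy_pair_from_Suc:
  assumes "heavy_pair_from Inv \<delta> k qs"
    and "\<And>j. k < j \<Longrightarrow> j < length qs \<Longrightarrow> invalid_overlap Inv (qs ! k) (qs ! j) \<le> \<delta>"
  shows "heavy_pair_from Inv \<delta> (Suc k) qs"
proof -
  obtain i j where ij: "k \<le> i" "i < j" "j < length qs" "invalid_overlap Inv (qs ! i) (qs ! j) > \<delta>"
    using assms(1) by (auto simp: heavy_pair_from_def)
  with assms(2) have "i \<noteq> k"
    by force
  with ij show ?thesis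
    unfolding heavy_pair_from_def by (intro exI[of _ i] exI[of _ j]) auto
qed

lemma invalid_overlap_le_if_lucky:
  assumes "\<not> unlucky_sample Inv \<epsilon> \<delta> Q q xs" "q' \<in> Q" "set_pmf q' \<inter> {x \<in> set xs. Inv x} = {}"
  shows "invalid_overlap Inv q q' \<le> \<delta>"
  using assms by (auto simp: unlucky_sample_def)

lemma prob_unlucky_sample_le:
  assumes "finite Q" "\<epsilon> \<le> 1" "\<delta> \<le> 1"
  shows "measure_pmf.prob (samples T q) {xs. unlucky_sample Inv \<epsilon> \<delta> Q q xs}
    \<le> (1 - \<epsilon>) ^ T + real (card Q) * (1 - \<delta>) ^ T"
proof -
  define K where "K = {q' \<in> Q. invalid_overlap Inv q q' > \<delta>}"
  define miss :: "nat set \<Rightarrow> nat list set" where "miss = (\<lambda>A. {xs. \<forall>x\<in>set xs. x \<notin> A})"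
  define E1 where "E1 = (if invalidity Inv q > \<epsilon> then miss {x. Inv x} else {})"
  have "{xs. unlucky_sample Inv \<epsilon> \<delta> Q q xs} \<subseteq> E1 \<union> (\<Union>q'\<in>K. miss {x. Inv x \<and> x \<in> set_pmf q'})"
    by (auto simp: unlucky_sample_def E1_def K_def miss_def)
  then have "measure_pmf.prob (samples T q) {xs. unlucky_sample Inv \<epsilon> \<delta> Q q xs}
      \<le> measure_pmf.prob (samples T q) (E1 \<union> (\<Union>q'\<in>K. miss {x. Inv x \<and> x \<in> set_pmf q'}))"
    by (rule measure_pmf.finite_measure_mono) simp
  also have "\<dots> \<le> measure_pmf.prob (samples T q) E1
      + measure_pmf.prob (samples T q) (\<Union>q'\<in>K. miss {x. Inv x \<and> x \<in> set_pmf q'})"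
    by (rule measure_Un_le) simp_all
  also have "\<dots> \<le> measure_pmf.prob (samples T q) E1
      + (\<Sum>q'\<in>K. measure_pmf.prob (samples T q) (miss {x. Inv x \<and> x \<in> set_pmf q'}))"
    using assms(1) unfolding K_def
    by (intro add_left_mono measure_pmf.finite_measure_subadditive_finite) auto
  also have "\<dots> \<le> (1 - \<epsilon>) ^ T + (\<Sum>q'\<in>K. (1 - \<delta>) ^ T)"
  proof (intro add_mono sum_mono)
    show "measure_pmf.prob (samples T q) E1 \<le> (1 - \<epsilon>) ^ T"
      using assms(2) prob_samples_avoid_le[of \<epsilon> q "{x. Inv x}" T]
      by (auto simp: E1_def miss_def invalidity_def)
    show "measure_pmf.prob (samples T q) (miss {x. Inv x \<and> x \<in> set_pmf q'}) \<le> (1 - \<delta>) ^ T"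
      if "q' \<in> K" for q'
      using that prob_samples_avoid_le[of \<delta> q "{x. Inv x \<and> x \<in> set_pmf q'}" T]
      by (simp add: K_def miss_def invalid_overlap_def)
  qed
  also have "\<dots> \<le> (1 - \<epsilon>) ^ T + real (card Q) * (1 - \<delta>) ^ T"
    using assms by (auto simp: K_def intro!: mult_right_mono card_mono)
  finally show ?thesis .
qed

lemma bad_outcome_Suc:
  assumes orc: "oracle_avoids Inv Q orc XP"
    and N': "finite N'" "N' \<subseteq> {x. Inv x}" "{x \<in> set xs. Inv x} \<subseteq> N'"
    and lucky: "\<not> unlucky_sample Inv \<epsilon> \<delta> Q q xs"
    and res: "res \<in> set_pmf (rounds Inv orc XP T r N' (hist @ [q]))"
    and bad: "bad_outcome Inv \<epsilon> \<delta> (length hist) res"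
  shows "bad_outcome Inv \<epsilon> \<delta> (Suc (length hist)) res"
proof (cases res)
  case (Inl q')
  then show ?thesis using bad by (simp add: bad_outcome_def)
next
  case (Inr qs)
  with res have "Inr qs \<in> set_pmf (rounds Inv orc XP T r N' (hist @ [q]))"
    by simp
  from set_pmf_rounds_Inr[OF orc N'(1,2) this]
  obtain new where qs: "qs = hist @ q # new" and new: "set new \<subseteq> avoiding Q N'"
    by auto
  have "invalid_overlap Inv (qs ! length hist) (qs ! j) \<le> \<delta>"
    if "length hist < j" "j < length qs" for j
  proof -
    have "qs ! j \<in> set new"
      using that qs by (auto simp: nth_append nth_Cons split: nat.split)
    then have "qs ! j \<in> Q" "set_pmf (qs ! j) \<inter> {x \<in> set xs. Inv x} = {}"
      using new N'(3) by (auto simp: avoiding_def)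
    then show ?thesis
      using invalid_overlap_le_if_lucky[OF lucky] qs by simp
  qed
  then show ?thesis
    using bad Inr heavy_pair_from_Suc by (simp add: bad_outcome_def)
qed

lemma prob_bad_outcome_rounds_le:
  fixes \<epsilon> \<delta> :: real and T :: nat
  assumes orc: "oracle_avoids Inv Q orc XP"
    and fin: "finite Q" and le1: "\<epsilon> \<le> 1" "\<delta> \<le> 1"
  defines "\<beta> \<equiv> (1 - \<epsilon>) ^ T + real (card Q) * (1 - \<delta>) ^ T"
  shows "finite N \<Longrightarrow> N \<subseteq> {x. Inv x} \<Longrightarrow>
    measure_pmf.prob (rounds Inv orc XP T r N hist) {res. bad_outcome Inv \<epsilon> \<delta> (length hist) res}
      \<le> real (card (avoiding Q N)) * \<beta>"
proof (induction r arbitrary: N hist)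
  have \<beta>: "\<beta> \<ge> 0"
    using le1 by (simp add: \<beta>_def)
  {
    case 0
    show ?case
      using \<beta> by (simp add: bad_outcome_def heavy_pair_from_def)
  next
    case (Suc r)
    define q where "q = orc XP N"
    define Bad where "Bad k = {res. bad_outcome Inv \<epsilon> \<delta> k res}" for k
    define n where "n = real (card (avoiding Q N))"
    have q: "q \<in> avoiding Q N"
      using oracle_avoidsD[OF orc Suc.prems] unfolding q_def .
    then have n: "n \<ge> 1"
      using fin by (auto simp: n_def avoiding_def Suc_le_eq card_gt_0_iff)
    have "measure_pmf.prob (rounds Inv orc XP T (Suc r) N hist) (Bad (length hist))
        \<le> measure_pmf.prob (samples T q) {xs. unlucky_sample Inv \<epsilon> \<delta> Q q xs} + (n - 1) * \<beta>"
      unfolding rounds.simps Let_def q_def[symmetric]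
    proof (rule measure_bind_pmf_le)
      show "(n - 1) * \<beta> \<ge> 0"
        using n \<beta> by simp
      fix xs
      assume xs: "xs \<in> set_pmf (samples T q)"
        and lucky: "xs \<notin> {xs. unlucky_sample Inv \<epsilon> \<delta> Q q xs}"
      show "measure_pmf.prob (if {x \<in> set xs. Inv x} = {} then return_pmf (Inl q)
          else rounds Inv orc XP T r (N \<union> {x \<in> set xs. Inv x}) (hist @ [q])) (Bad (length hist))
          \<le> (n - 1) * \<beta>"
      proof (cases "{x \<in> set xs. Inv x} = {}")
        case True
        then have "invalidity Inv q \<le> \<epsilon>"
          using lucky by (auto simp: unlucky_sample_def)
        then show ?thesis
          using True n \<beta> by (simp add: Bad_def bad_outcome_def)
      next
        case False
        define N' where "N' = N \<union> {x \<in> set xs. Inv x}"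
        have N': "finite N'" "N' \<subseteq> {x. Inv x}"
          using Suc.prems by (auto simp: N'_def)
        have "measure_pmf.prob (rounds Inv orc XP T r N' (hist @ [q])) (Bad (length hist))
            \<le> measure_pmf.prob (rounds Inv orc XP T r N' (hist @ [q])) (Bad (length (hist @ [q])))"
          using bad_outcome_Suc[OF orc N' _ lucky[simplified]]
          by (intro measure_pmf.finite_measure_mono_AE AE_pmfI) (auto simp: Bad_def N'_def)
        also have "\<dots> \<le> real (card (avoiding Q N')) * \<beta>"
          unfolding Bad_def by (rule Suc.IH[OF N'])
        also have "\<dots> \<le> (n - 1) * \<beta>"
        proof -
          have "set_pmf q \<inter> N' \<noteq> {}"
            using False set_pmf_samples[OF xs] by (auto simp: N'_def)
          then have "card (avoiding Q N') < card (avoiding Q N)"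
            using card_avoiding_less[OF fin q] by (auto simp: N'_def)
          then show ?thesis
            using \<beta> by (intro mult_right_mono) (auto simp: n_def)
        qed
        finally show ?thesis
          using False by (simp only: if_False N'_def)
      qed
    qed
    also have "\<dots> \<le> \<beta> + (n - 1) * \<beta>"
      using prob_unlucky_sample_le[OF fin le1] by (simp add: \<beta>_def)
    finally show ?case
      by (simp add: Bad_def n_def algebra_simps)
  }
qed

lemma invalidity_fallback_le:
  fixes \<delta> \<epsilon> :: real
  assumes "\<not> Inv xstar"
    and overlap: "\<And>j. i < j \<Longrightarrow> j < length qs \<Longrightarrow> invalid_overlap Inv (qs ! i) (qs ! j) \<le> \<delta>"
    and "\<delta> \<ge> 0" "\<delta> * real (length qs) \<le> \<epsilon>"
  shows "invalidity Inv (fallback xstar qs i) \<le> \<epsilon>"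
proof -
  define later where "later = (\<lambda>x. \<exists>j. i < j \<and> j < length qs \<and> x \<in> set_pmf (qs ! j))"
  have "invalidity Inv (fallback xstar qs i)
      = measure_pmf.prob (qs ! i) ((\<lambda>x. if later x then x else xstar) -` {x. Inv x})"
    unfolding invalidity_def fallback_def later_def by simp
  also have "\<dots> \<le> measure_pmf.prob (qs ! i) (\<Union>j\<in>{i<..<length qs}. {x. Inv x \<and> x \<in> set_pmf (qs ! j)})"
    using assms(1) by (intro measure_pmf.finite_measure_mono) (auto simp: later_def)
  also have "\<dots> \<le> (\<Sum>j\<in>{i<..<length qs}. invalid_overlap Inv (qs ! i) (qs ! j))"
    unfolding invalid_overlap_def by (rule measure_pmf.finite_measure_subadditive_finite) auto
  also have "\<dots> \<le> real (card {i<..<length qs}) * \<delta>"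
    using sum_mono[of "{i<..<length qs}" _ "\<lambda>_. \<delta>"] overlap by simp
  also have "\<dots> \<le> \<epsilon>"
    using assms(3,4) mult_right_mono[of "real (card {i<..<length qs})" "real (length qs)" \<delta>]
    by (simp add: mult.commute)
  finally show ?thesis .
qed

definition output_pmf :: "nat \<Rightarrow> nat \<Rightarrow> nat pmf + nat pmf list \<Rightarrow> nat pmf pmf" where
  "output_pmf xstar R res = (case res of
       Inl q \<Rightarrow> return_pmf q
     | Inr qs \<Rightarrow> map_pmf (fallback xstar qs) (pmf_of_set {0..<R}))"

lemma algorithm1_eq:
  "algorithm1 p Inv orc xstar P R T =
     bind_pmf (samples P p) (\<lambda>xs. bind_pmf (rounds Inv orc (mset xs) T R {} []) (output_pmf xstar R))"
  unfolding algorithm1_def output_pmf_def ..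

lemma invalidity_output_le:
  fixes \<epsilon> \<delta> :: real
  assumes orc: "oracle_avoids Inv Q orc XP" and "\<not> Inv xstar" "R \<ge> 1" "\<delta> \<ge> 0" "\<delta> * real R \<le> \<epsilon>"
    and res: "res \<in> set_pmf (rounds Inv orc XP T R {} [])" "\<not> bad_outcome Inv \<epsilon> \<delta> 0 res"
    and q: "q \<in> set_pmf (output_pmf xstar R res)"
  shows "invalidity Inv q \<le> \<epsilon>"
proof (cases res)
  case (Inl q')
  then show ?thesis
    using res(2) q by (simp add: bad_outcome_def output_pmf_def)
next
  case (Inr qs)
  then have len: "length qs = R"
    using set_pmf_rounds_Inr[OF orc finite.emptyI empty_subsetI res(1)[unfolded Inr]] by auto
  from q Inr obtain i where qi: "q = fallback xstar qs i"
    using assms(3) by (auto simp: output_pmf_def)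
  have "\<not> heavy_pair_from Inv \<delta> 0 qs"
    using res(2) Inr by (simp add: bad_outcome_def)
  then show ?thesis
    unfolding qi using assms(2,4,5) len
    by (intro invalidity_fallback_le[where \<delta> = \<delta>]) (auto simp: heavy_pair_from_def not_less, meson leD)
qed

lemma prob_output_invalid_le:
  fixes \<epsilon> \<delta> :: real
  assumes orc: "oracle_avoids Inv Q orc XP" and "finite Q" "\<not> Inv xstar"
    and "R \<ge> 1" "0 \<le> \<delta>" "\<delta> * real R \<le> \<epsilon>" "\<epsilon> \<le> 1" "\<delta> \<le> 1"
  shows "measure_pmf.prob (bind_pmf (rounds Inv orc XP T R {} []) (output_pmf xstar R))
      {q. invalidity Inv q > \<epsilon>}
    \<le> real (card Q) * ((1 - \<epsilon>) ^ T + real (card Q) * (1 - \<delta>) ^ T)"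
proof -
  have "measure_pmf.prob (bind_pmf (rounds Inv orc XP T R {} []) (output_pmf xstar R))
      {q. invalidity Inv q > \<epsilon>}
    \<le> measure_pmf.prob (rounds Inv orc XP T R {} []) {res. bad_outcome Inv \<epsilon> \<delta> 0 res} + 0"
  proof (rule measure_bind_pmf_le)
    fix res
    assume "res \<in> set_pmf (rounds Inv orc XP T R {} [])"
      and "res \<notin> {res. bad_outcome Inv \<epsilon> \<delta> 0 res}"
    then have "set_pmf (output_pmf xstar R res) \<inter> {q. invalidity Inv q > \<epsilon>} = {}"
      using invalidity_output_le[OF orc assms(3-6)] by fastforce
    then show "measure_pmf.prob (output_pmf xstar R res) {q. invalidity Inv q > \<epsilon>} \<le> 0"
      unfolding measure_pmf_zero_iff[symmetric] by simp
  qed simp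
  also have "\<dots> \<le> real (card (avoiding Q {})) * ((1 - \<epsilon>) ^ T + real (card Q) * (1 - \<delta>) ^ T)"
    using prob_bad_outcome_rounds_le[OF orc assms(2,7,8), of "{}" T R "[]"] by simp
  finally show ?thesis
    by (simp add: avoiding_def)
qed

lemma prob_algorithm1_invalid_le:
  fixes \<epsilon> \<delta> :: real
  assumes "finite Q" "is_oracle Q L orc" "q0 \<in> Q" "invalidity Inv q0 = 0" "\<not> Inv xstar"
    and "P \<ge> 1" "R \<ge> 1" "0 \<le> \<delta>" "\<delta> * real R \<le> \<epsilon>" "\<epsilon> \<le> 1" "\<delta> \<le> 1"
  shows "measure_pmf.prob (algorithm1 p Inv orc xstar P R T) {q. invalidity Inv q > \<epsilon>}
    \<le> real (card Q) * ((1 - \<epsilon>) ^ T + real (card Q) * (1 - \<delta>) ^ T)"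
proof -
  have q0: "set_pmf q0 \<inter> {x. Inv x} = {}"
    using assms(4) by (auto simp: invalidity_def measure_pmf_zero_iff)
  have "measure_pmf.prob (algorithm1 p Inv orc xstar P R T) {q. invalidity Inv q > \<epsilon>}
      \<le> measure_pmf.prob (samples P p) {}
        + real (card Q) * ((1 - \<epsilon>) ^ T + real (card Q) * (1 - \<delta>) ^ T)"
    unfolding algorithm1_eq
  proof (rule measure_bind_pmf_le)
    show "real (card Q) * ((1 - \<epsilon>) ^ T + real (card Q) * (1 - \<delta>) ^ T) \<ge> 0"
      using assms(10,11) by simp
    fix xs
    assume "xs \<in> set_pmf (samples P p)"
    then have "mset xs \<noteq> {#}"
      using set_pmf_samples assms(6) by fastforce
    then show "measure_pmf.prob (bind_pmf (rounds Inv orc (mset xs) T R {} []) (output_pmf xstar R))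
        {q. invalidity Inv q > \<epsilon>} \<le> real (card Q) * ((1 - \<epsilon>) ^ T + real (card Q) * (1 - \<delta>) ^ T)"
      using prob_output_invalid_le[OF is_oracle_avoids[OF assms(2) _ assms(3) q0] assms(1,5,7-11)]
      by blast
  qed
  then show ?thesis
    by simp
qed

lemma failure_bound_le:
  fixes n \<epsilon> \<delta> :: real and T :: nat
  assumes n: "n \<ge> 2" and "0 \<le> \<delta>" "\<delta> \<le> \<epsilon>" "\<epsilon> \<le> 1" and T: "6 * ln n \<le> \<delta> * real T"
  shows "n * ((1 - \<epsilon>) ^ T + n * (1 - \<delta>) ^ T) \<le> 1/8"
proof -
  have "(1 - \<delta>) ^ T \<le> exp (- \<delta>) ^ T"
    using assms(2-4) by (intro power_mono) (auto simp: exp_ge_add_one_self[of "- \<delta>", simplified])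
  also have "\<dots> = exp (- (\<delta> * real T))"
    by (simp add: exp_of_nat_mult[symmetric] mult.commute)
  also have "\<dots> \<le> exp (- (6 * ln n))"
    using T by simp
  also have "\<dots> = 1 / n ^ 6"
    using n exp_of_nat_mult[of 6 "ln n"] by (simp add: exp_minus inverse_eq_divide)
  finally have \<delta>: "(1 - \<delta>) ^ T \<le> 1 / n ^ 6" .
  have "(1 - \<epsilon>) ^ T \<le> (1 - \<delta>) ^ T"
    using assms(2-4) by (intro power_mono) auto
  then have "n * ((1 - \<epsilon>) ^ T + n * (1 - \<delta>) ^ T) \<le> n * (1 / n ^ 6 + n * (1 / n ^ 6))"
    using \<delta> n by (intro mult_left_mono add_mono) auto
  also have "\<dots> \<le> 2 / n ^ 4"
    using n by (simp add: field_simps eval_nat_numeral)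
  also have "\<dots> \<le> 2 / 2 ^ 4"
    using n by (intro divide_left_mono power_mono) auto
  finally show ?thesis
    by simp
qed

lemma prob_algorithm1_valid_ge:
  fixes \<epsilon>1 \<epsilon>2 M :: real
  assumes "finite Q" "card Q \<ge> 2" "is_oracle Q L orc" "q0 \<in> Q" "invalidity Inv q0 = 0" "\<not> Inv xstar"
    and "M > 0" "\<epsilon>1 > 0" "\<epsilon>2 > 0"
    and P: "P = nat \<lceil>M^2 / \<epsilon>1^2 * ln (real (card Q))\<rceil>"
    and R: "R = nat \<lceil>M / \<epsilon>1\<rceil>"
    and T: "T = nat \<lceil>6 * real R / \<epsilon>2 * ln (real (card Q))\<rceil>"
  shows "measure_pmf.prob (algorithm1 p Inv orc xstar P R T) {q. invalidity Inv q \<le> \<epsilon>2} \<ge> 7/8"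
proof (cases "\<epsilon>2 \<le> 1")
  case False
  then have "{q. invalidity Inv q \<le> \<epsilon>2} = UNIV"
    by (auto simp: invalidity_def intro: order_trans[OF measure_pmf.prob_le_1])
  then show ?thesis
    by simp
next
  case True
  define n where "n = real (card Q)"
  define \<delta> where "\<delta> = \<epsilon>2 / real R"
  have n: "n \<ge> 2" and "ln n > 0"
    using assms(2) by (auto simp: n_def)
  have "P \<ge> 1" "R \<ge> 1"
    using assms(7-8) \<open>ln n > 0\<close> by (auto simp: P R n_def Suc_le_eq)
  then have \<delta>: "0 \<le> \<delta>" "\<delta> \<le> \<epsilon>2" "\<delta> * real R = \<epsilon>2"
    using assms(9) by (auto simp: \<delta>_def field_simps)
  have "6 * ln n = \<delta> * (6 * real R / \<epsilon>2 * ln n)"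
    using \<open>R \<ge> 1\<close> assms(9) by (simp add: \<delta>_def)
  also have "\<dots> \<le> \<delta> * real T"
    using \<delta>(1) by (intro mult_left_mono) (auto simp: T n_def real_nat_ceiling_ge)
  finally have "n * ((1 - \<epsilon>2) ^ T + n * (1 - \<delta>) ^ T) \<le> 1/8"
    using failure_bound_le[OF n \<delta>(1,2) True] by blast
  then have "measure_pmf.prob (algorithm1 p Inv orc xstar P R T) {q. invalidity Inv q > \<epsilon>2} \<le> 1/8"
    using prob_algorithm1_invalid_le[OF assms(1,3-6) \<open>P \<ge> 1\<close> \<open>R \<ge> 1\<close>, of \<delta> \<epsilon>2 p T] \<delta> True
    by (simp add: n_def)
  moreover have "{q. invalidity Inv q \<le> \<epsilon>2} = UNIV - {q. invalidity Inv q > \<epsilon>2}"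
    by auto
  ultimately show ?thesis
    using measure_pmf.prob_compl[of "{q. invalidity Inv q > \<epsilon>2}" "algorithm1 p Inv orc xstar P R T"]
    by simp
qed

theorem lemma1:
  shows "\<exists>c1 c2 c3 :: real. c1 > 0 \<and> c2 > 0 \<and> c3 > 0 \<and>
    (\<forall>(p :: nat pmf) (Inv :: nat \<Rightarrow> bool) (M :: real) (L :: real \<Rightarrow> real)
       (Q :: nat pmf set) orc xstar (\<epsilon>1 :: real) (\<epsilon>2 :: real) P R T.
       (\<forall>x\<in>set_pmf p. \<not> Inv x) \<and>
       M > 0 \<and>
       (\<forall>x\<in>{0..1}. 0 \<le> L x \<and> L x \<le> M) \<and>
       (\<forall>x y. 0 \<le> x \<and> x \<le> y \<and> y \<le> 1 \<longrightarrow> L y \<le> L x) \<and>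
       finite Q \<and> card Q \<ge> 2 \<and>
       (\<exists>q\<in>Q. invalidity Inv q = 0) \<and>
       is_oracle Q L orc \<and>
       \<not> Inv xstar \<and>
       \<epsilon>1 > 0 \<and> \<epsilon>2 > 0 \<and>
       P = nat \<lceil>c1 * M^2 / \<epsilon>1^2 * ln (real (card Q))\<rceil> \<and>
       R = nat \<lceil>c2 * M / \<epsilon>1\<rceil> \<and>
       T = nat \<lceil>c3 * real R / \<epsilon>2 * ln (real (card Q))\<rceil>
       \<longrightarrow> measure_pmf.prob (algorithm1 p Inv orc xstar P R T)
             {q. invalidity Inv q \<le> \<epsilon>2} \<ge> 7/8)"
  by (rule exI[of _ 1], rule exI[of _ 1], rule exI[of _ 6]) (auto simp only: mult_1 intro: prob_algorithm1_valid_ge)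

end
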